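(* Let $\rho\in(0,1]$, let $M$ be a finite set, and let $(S_i)_{i\in I}$ be a nonempty family (with $I$ finite) of subsets of $M$ such that $|S_i|\geq\rho|M|$ for all $i\in I$. Set $k(\rho):=\lceil\rho^{-1}\rceil+1$ and $t(\rho):=\rho/\Delta_{\lceil\rho^{-1}\rceil}$, where $\Delta_n:=\frac12 n(n+1)$. Then: (1) If $J\subseteq I$ with $|J|\geq k(\rho)$, then there exist distinct $i,j\in J$ with $|S_i\cap S_j|\geq t(\rho)|M|$. (2) There exists $i\in I$ such that for at least $\frac{|I|-(k(\rho)-1)}{k(\rho)-1}$ many $j\in I\setminus\{i\}$ we have $|S_i\cap S_j|\geq t(\rho)|M|$. (3) If $|I|\geq 2(k(\rho)-1)$, then there exists $i\in I$ such that for at least $\frac{|I|}{2(k(\rho)-1)}$ many $j\in I\setminus\{i\}$ we have $|S_i\cap S_j|\geq t(\rho)|M|$. *)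

theory Defs
  imports Complex_Main
begin

definition Delta :: "nat \<Rightarrow> real" where
  "Delta n = real n * (real n + 1) / 2"

definition k_rho :: "real \<Rightarrow> nat" where
  "k_rho \<rho> = nat \<lceil>1 / \<rho>\<rceil> + 1"

definition t_rho :: "real \<Rightarrow> real" where
  "t_rho \<rho> = \<rho> / Delta (nat \<lceil>1 / \<rho>\<rceil>)"

end

theory Submission
  imports Defs
begin

text \<open>
  Among any \<open>n + 1\<close> of the sets, where \<open>n = \<lceil>1/\<rho>\<rceil>\<close>, the sizes add up to at least
  \<open>(n + 1)\<rho>|M| \<ge> |M| + \<rho>|M|\<close>, while their union has at most \<open>|M|\<close> elements; by the
  Bonferroni inequality the \<open>\<Delta>\<^sub>n\<close> pairwise intersections therefore have total size at
  least \<open>\<rho>|M|\<close>, so one of them has size at least \<open>t(\<rho>)|M|\<close>. This is (1): the graph on \<open>I\<close>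
  joining \<open>i\<close> and \<open>j\<close> when \<open>|S\<^sub>i \<inter> S\<^sub>j| \<ge> t(\<rho>)|M|\<close> has no independent set of size \<open>n + 1\<close>.
  A greedy argument yields an independent set of size at least \<open>|I|/(D + 1)\<close>, where \<open>D\<close>
  is the maximal degree, so \<open>|I| \<le> n(D + 1)\<close>, which gives (2) and (3).
\<close>

lemma sum_offdiag_insert:
  assumes "finite A" "a \<notin> A"
  shows "(\<Sum>i\<in>insert a A. \<Sum>j\<in>insert a A - {i}. f i j)
           = (\<Sum>j\<in>A. f a j) + (\<Sum>i\<in>A. f i a) + (\<Sum>i\<in>A. \<Sum>j\<in>A - {i}. f i j)"
proof -
  have "(\<Sum>j\<in>insert a A - {i}. f i j) = f i a + (\<Sum>j\<in>A - {i}. f i j)" if "i \<in> A" for i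
  proof -
    have "insert a A - {i} = insert a (A - {i})" using that assms(2) by auto
    then show ?thesis using assms that by simp
  qed
  then have "(\<Sum>i\<in>A. \<Sum>j\<in>insert a A - {i}. f i j) = (\<Sum>i\<in>A. f i a) + (\<Sum>i\<in>A. \<Sum>j\<in>A - {i}. f i j)"
    by (simp add: sum.distrib)
  moreover have "insert a A - {a} = A" using assms(2) by auto
  ultimately show ?thesis using assms by (simp add: add.assoc)
qed

lemma sum_card_le_card_UN_plus_card_Int_pairs:
  assumes "finite A" "\<And>i. i \<in> A \<Longrightarrow> finite (S i)"
  shows "2 * (\<Sum>i\<in>A. card (S i))
           \<le> 2 * card (\<Union>i\<in>A. S i) + (\<Sum>i\<in>A. \<Sum>j\<in>A - {i}. card (S i \<inter> S j))"
  using assms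
proof (induction A rule: finite_induct)
  case empty
  show ?case by simp
next
  case (insert a A)
  let ?U = "\<Union>i\<in>A. S i"
  have union: "card (S a \<union> ?U) + card (S a \<inter> ?U) = card (S a) + card ?U"
    by (rule card_Un_Int[symmetric]) (use insert in auto)
  have overlap: "card (S a \<inter> ?U) \<le> (\<Sum>j\<in>A. card (S a \<inter> S j))"
  proof -
    have "S a \<inter> ?U = (\<Union>j\<in>A. S a \<inter> S j)" by blast
    then show ?thesis using card_UN_le[OF insert(1), of "\<lambda>j. S a \<inter> S j"] by simp
  qed
  have "(\<Sum>i\<in>A. card (S i \<inter> S a)) = (\<Sum>j\<in>A. card (S a \<inter> S j))"
    by (simp add: Int_commute)
  then show ?case
    unfolding sum_offdiag_insert[OF insert(1,2)] using union overlap insert by simp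
qed

lemma exists_pair_card_Int_ge:
  fixes \<rho> :: real and n :: nat
  assumes "finite M" "finite A" "card A = n + 1" "1 \<le> real n * \<rho>"
    and "\<And>i. i \<in> A \<Longrightarrow> S i \<subseteq> M"
    and "\<And>i. i \<in> A \<Longrightarrow> real (card (S i)) \<ge> \<rho> * real (card M)"
  shows "\<exists>i\<in>A. \<exists>j\<in>A. i \<noteq> j \<and> real (card (S i \<inter> S j)) \<ge> \<rho> / Delta n * real (card M)"
proof (rule ccontr)
  define c where "c = \<rho> / Delta n * real (card M)"
  assume "\<not> ?thesis"
  then have small: "real (card (S i \<inter> S j)) < c" if "i \<in> A" "j \<in> A - {i}" for i j
    using that unfolding c_def by force
  have "n \<noteq> 0" using assms(4) by (cases "n = 0") auto
  then have "real n * (real n + 1) \<noteq> 0" by simp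
  have "(\<Sum>i\<in>A. \<Sum>j\<in>A - {i}. real (card (S i \<inter> S j))) < (\<Sum>i\<in>A. \<Sum>j\<in>A - {i}. c)"
  proof (rule sum_strict_mono)
    fix i assume "i \<in> A"
    then have "card (A - {i}) = n" using assms(2,3) by simp
    then have "A - {i} \<noteq> {}" using \<open>n \<noteq> 0\<close> by (metis card.empty)
    then show "(\<Sum>j\<in>A - {i}. real (card (S i \<inter> S j))) < (\<Sum>j\<in>A - {i}. c)"
      using assms(2) \<open>i \<in> A\<close> small by (intro sum_strict_mono) auto
  qed (use assms(2,3) in auto)
  also have "\<dots> = real n * (real n + 1) * c"
    using assms(2,3) by (simp add: algebra_simps)
  also have "\<dots> = 2 * \<rho> * real (card M)"
    using \<open>real n * (real n + 1) \<noteq> 0\<close> unfolding c_def Delta_def by simp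
  finally have pairs: "(\<Sum>i\<in>A. \<Sum>j\<in>A - {i}. real (card (S i \<inter> S j))) < 2 * \<rho> * real (card M)" .
  have "2 * (\<Sum>i\<in>A. card (S i))
          \<le> 2 * card (\<Union>i\<in>A. S i) + (\<Sum>i\<in>A. \<Sum>j\<in>A - {i}. card (S i \<inter> S j))"
    using assms(2) rev_finite_subset[OF assms(1) assms(5)] by (rule sum_card_le_card_UN_plus_card_Int_pairs)
  then have "2 * (\<Sum>i\<in>A. real (card (S i)))
          \<le> 2 * real (card (\<Union>i\<in>A. S i)) + (\<Sum>i\<in>A. \<Sum>j\<in>A - {i}. real (card (S i \<inter> S j)))"
    using of_nat_mono[where 'a=real] by fastforce
  moreover have "real n * \<rho> * real (card M) + \<rho> * real (card M) \<le> (\<Sum>i\<in>A. real (card (S i)))"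
    using sum_mono[of A "\<lambda>_. \<rho> * real (card M)" "\<lambda>i. real (card (S i))"] assms(3,6)
    by (simp add: algebra_simps)
  moreover have "real (card (\<Union>i\<in>A. S i)) \<le> real (card M)"
    using assms(1,5) by (simp add: card_mono UN_least)
  moreover have "real (card M) \<le> real n * \<rho> * real (card M)"
    using mult_right_mono[OF assms(4), of "real (card M)"] by simp
  ultimately show False using pairs by linarith
qed

lemma exists_independent_subset_card_ge:
  fixes R :: "'b \<Rightarrow> 'b \<Rightarrow> bool" and D :: nat
  assumes "finite I" "\<And>i j. R i j \<Longrightarrow> R j i"
    and "\<And>i. i \<in> I \<Longrightarrow> card {j \<in> I - {i}. R i j} \<le> D"
  shows "\<exists>J\<subseteq>I. (\<forall>i\<in>J. \<forall>j\<in>J. i \<noteq> j \<longrightarrow> \<not> R i j) \<and> card I \<le> card J * (D + 1)"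
  using assms(1,3)
proof (induction I rule: finite_psubset_induct)
  case (psubset I)
  show ?case
  proof (cases "I = {}")
    case True
    then show ?thesis by auto
  next
    case False
    then obtain a where "a \<in> I" by auto
    define N where "N = {j \<in> I - {a}. R a j}"
    define I' where "I' = I - insert a N"
    have "I' \<subset> I" using \<open>a \<in> I\<close> unfolding I'_def by auto
    have degree: "card {j \<in> I' - {i}. R i j} \<le> D" if "i \<in> I'" for i
    proof -
      have "card {j \<in> I' - {i}. R i j} \<le> card {j \<in> I - {i}. R i j}"
        using psubset.hyps unfolding I'_def by (intro card_mono) auto
      also have "\<dots> \<le> D" using psubset.prems that unfolding I'_def by auto
      finally show ?thesis .
    qed
    obtain J where J: "J \<subseteq> I'" "\<forall>i\<in>J. \<forall>j\<in>J. i \<noteq> j \<longrightarrow> \<not> R i j"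
        "card I' \<le> card J * (D + 1)"
      using psubset.IH[OF \<open>I' \<subset> I\<close> degree] by blast
    have "finite J"
      using J(1) psubset.hyps unfolding I'_def by (meson finite_Diff finite_subset)
    have "a \<notin> J" using J(1) unfolding I'_def by auto
    have "\<not> R a j" if "j \<in> J" for j
      using J(1) that unfolding I'_def N_def by auto
    then have independent: "\<forall>i\<in>insert a J. \<forall>j\<in>insert a J. i \<noteq> j \<longrightarrow> \<not> R i j"
      using J(2) assms(2) by blast
    have large: "card I \<le> card (insert a J) * (D + 1)"
    proof -
      have "card (insert a N) \<le> D + 1"
      proof -
        have "finite N" "card N \<le> D" using psubset.hyps psubset.prems[OF \<open>a \<in> I\<close>] unfolding N_def by auto
        then show ?thesis by (simp add: card_insert_if)
      qed
      have "I = I' \<union> insert a N" using \<open>a \<in> I\<close> unfolding I'_def N_def by auto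
      then have "card I \<le> card I' + card (insert a N)" by (metis card_Un_le)
      also have "\<dots> \<le> card J * (D + 1) + (D + 1)"
        using J(3) \<open>card (insert a N) \<le> D + 1\<close> by linarith
      also have "\<dots> = card (insert a J) * (D + 1)"
        using \<open>a \<notin> J\<close> \<open>finite J\<close> by simp
      finally show ?thesis .
    qed
    have "insert a J \<subseteq> I" using \<open>a \<in> I\<close> J(1) \<open>I' \<subset> I\<close> by auto
    with independent large show ?thesis by (intro exI[of _ "insert a J"] conjI)
  qed
qed

lemma exists_degree_ge_if_no_large_independent_subset:
  fixes R :: "'b \<Rightarrow> 'b \<Rightarrow> bool" and n :: nat
  assumes "finite I" "I \<noteq> {}" "\<And>i j. R i j \<Longrightarrow> R j i"
    and "\<And>J. J \<subseteq> I \<Longrightarrow> n + 1 \<le> card J \<Longrightarrow> \<exists>i\<in>J. \<exists>j\<in>J. i \<noteq> j \<and> R i j"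
  shows "\<exists>i\<in>I. card I \<le> n * (card {j \<in> I - {i}. R i j} + 1)"
proof -
  define deg where "deg i = card {j \<in> I - {i}. R i j}" for i
  have "Max (deg ` I) \<in> deg ` I" using assms(1,2) by (intro Max_in) auto
  then obtain i where "i \<in> I" "deg i = Max (deg ` I)" by auto
  then have max_degree: "card {j \<in> I - {i'}. R i' j} \<le> deg i" if "i' \<in> I" for i'
    using assms(1) that unfolding deg_def by simp
  obtain J where "J \<subseteq> I" and independent: "\<forall>i\<in>J. \<forall>j\<in>J. i \<noteq> j \<longrightarrow> \<not> R i j"
      and covers: "card I \<le> card J * (deg i + 1)"
    using exists_independent_subset_card_ge[OF assms(1,3) max_degree] by blast
  have "card J \<le> n"
  proof (rule ccontr)
    assume "\<not> card J \<le> n"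
    then obtain i j where "i \<in> J" "j \<in> J" "i \<noteq> j" "R i j"
      using assms(4)[OF \<open>J \<subseteq> I\<close>] by auto
    with independent show False by blast
  qed
  with covers have "card I \<le> n * (deg i + 1)" using mult_le_mono1 order_trans by blast
  then show ?thesis using \<open>i \<in> I\<close> unfolding deg_def by blast
qed

theorem lemma4:
  fixes \<rho> :: real and M :: "'a set" and I :: "'b set" and S :: "'b \<Rightarrow> 'a set"
  assumes "0 < \<rho>" and "\<rho> \<le> 1"
    and "finite M" and "finite I" and "I \<noteq> {}"
    and "\<And>i. i \<in> I \<Longrightarrow> S i \<subseteq> M"
    and "\<And>i. i \<in> I \<Longrightarrow> real (card (S i)) \<ge> \<rho> * real (card M)"
  shows "(\<forall>J. J \<subseteq> I \<and> card J \<ge> k_rho \<rho> \<longrightarrow>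
            (\<exists>i\<in>J. \<exists>j\<in>J. i \<noteq> j \<and> real (card (S i \<inter> S j)) \<ge> t_rho \<rho> * real (card M)))
       \<and> (\<exists>i\<in>I. real (card {j \<in> I - {i}. real (card (S i \<inter> S j)) \<ge> t_rho \<rho> * real (card M)})
              \<ge> (real (card I) - (real (k_rho \<rho>) - 1)) / (real (k_rho \<rho>) - 1))
       \<and> (real (card I) \<ge> 2 * (real (k_rho \<rho>) - 1) \<longrightarrow>
            (\<exists>i\<in>I. real (card {j \<in> I - {i}. real (card (S i \<inter> S j)) \<ge> t_rho \<rho> * real (card M)})
              \<ge> real (card I) / (2 * (real (k_rho \<rho>) - 1))))"
proof -
  define n where "n = nat \<lceil>1 / \<rho>\<rceil>"
  have k: "k_rho \<rho> = n + 1" and t: "t_rho \<rho> = \<rho> / Delta n"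
    unfolding k_rho_def t_rho_def n_def by simp_all
  have "1 / \<rho> \<le> real n" unfolding n_def by (rule real_nat_ceiling_ge)
  then have n_rho: "1 \<le> real n * \<rho>" using assms(1) by (simp add: field_simps)
  moreover have "real n * \<rho> \<le> real n" using assms(2) by (simp add: mult_left_le)
  ultimately have "1 \<le> real n" by linarith
  define R where "R i j \<longleftrightarrow> t_rho \<rho> * real (card M) \<le> real (card (S i \<inter> S j))" for i j
  have pair: "\<exists>i\<in>J. \<exists>j\<in>J. i \<noteq> j \<and> R i j" if "J \<subseteq> I" "n + 1 \<le> card J" for J
  proof -
    obtain A where "A \<subseteq> J" "card A = n + 1"
      using obtain_subset_with_card_n[OF \<open>n + 1 \<le> card J\<close>] by metis
    then have "A \<subseteq> I" using that(1) by blast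
    then have "finite A" using assms(4) by (rule finite_subset)
    have "\<exists>i\<in>A. \<exists>j\<in>A. i \<noteq> j \<and> R i j"
      unfolding R_def t
      by (rule exists_pair_card_Int_ge[OF assms(3) \<open>finite A\<close> \<open>card A = n + 1\<close> n_rho])
        (use \<open>A \<subseteq> I\<close> assms(6,7) in auto)
    then show ?thesis using \<open>A \<subseteq> J\<close> by blast
  qed
  have R_sym: "R i j \<Longrightarrow> R j i" for i j unfolding R_def by (simp add: Int_commute)
  obtain i where "i \<in> I" and degree: "card I \<le> n * (card {j \<in> I - {i}. R i j} + 1)"
    using exists_degree_ge_if_no_large_independent_subset[OF assms(4,5) R_sym pair] by blast
  define d where "d = real (card {j \<in> I - {i}. R i j})"
  have "real (card I) \<le> real n * (d + 1)"
    using of_nat_mono[OF degree, where 'a = real] unfolding d_def by (simp add: algebra_simps)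
  then have part2: "(real (card I) - real n) / real n \<le> d"
    using \<open>1 \<le> real n\<close> by (simp add: field_simps)
  have part3: "real (card I) / (2 * real n) \<le> d" if "2 * real n \<le> real (card I)"
    using that part2 \<open>1 \<le> real n\<close> by (simp add: field_simps)
  have part1: "\<forall>J. J \<subseteq> I \<and> card J \<ge> k_rho \<rho> \<longrightarrow> (\<exists>i\<in>J. \<exists>j\<in>J. i \<noteq> j \<and> R i j)"
    using pair unfolding k by blast
  show ?thesis
    using part1 part2 part3 \<open>i \<in> I\<close> unfolding k d_def R_def by force
qed

end
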